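(* $FUG\equiv_c FLO$.
   Context: Conventions: every structure is for a finite relational language and has universe a subset of $\omega$; a class of structures is a collection of structures for one fixed finite relational language closed under isomorphism. $D(\mathcal{A})$ is the atomic diagram of $\mathcal{A}$. A computable transformation from $K$ to $K'$ is a c.e. set $\Phi$ of pairs $(\alpha,\varphi)$, $\alpha$ a finite subset of the atomic diagram of a finite structure in the language of $K$, $\varphi$ an atomic sentence or negation of one in the language of $K'$, such that for every $\mathcal{A}\in K$, $\{\varphi:(\exists\alpha\subseteq D(\mathcal{A}))(\alpha,\varphi)\in\Phi\}=D(\mathcal{B})$ for some $\mathcal{B}\in K'$, written $\Phi(\mathcal{A})=\mathcal{B}$. A computable embedding is a computable transformation with $\mathcal{A}\cong\mathcal{A}'\iff\Phi(\mathcal{A})\cong\Phi(\mathcal{A}')$ for all $\mathcal{A},\mathcal{A}'\in K$; $K\le_c K'$ means one exists, and $K\equiv_c K'$ means $K\le_c K'$ and $K'\le_c K$. $FUG$ is the class of finite undirected graphs; $FLO$ is the class of finite linear orders. *)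

theory Defs
  imports Main "HOL-Library.Nat_Bijection"
begin

datatype recf = Z | S | Id nat | Cn recf "recf list" | Pr recf recf | Mn recf

inductive eval :: "recf \<Rightarrow> nat list \<Rightarrow> nat \<Rightarrow> bool" where
  eval_Z: "eval Z xs 0"
| eval_S: "eval S (x # xs) (Suc x)"
| eval_Id: "i < length xs \<Longrightarrow> eval (Id i) xs (xs ! i)"
| eval_Cn: "length ys = length gs \<Longrightarrow> (\<forall>i < length gs. eval (gs ! i) xs (ys ! i))
            \<Longrightarrow> eval f ys z \<Longrightarrow> eval (Cn f gs) xs z"
| eval_Pr0: "eval f xs y \<Longrightarrow> eval (Pr f g) (0 # xs) y"
| eval_PrS: "eval (Pr f g) (n # xs) y \<Longrightarrow> eval g (y # n # xs) z
            \<Longrightarrow> eval (Pr f g) (Suc n # xs) z"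
| eval_Mn: "eval f (n # xs) 0 \<Longrightarrow> (\<forall>m < n. \<exists>y. eval f (m # xs) (Suc y))
            \<Longrightarrow> eval (Mn f) xs n"

definition ce :: "nat set \<Rightarrow> bool" where
  "ce A \<longleftrightarrow> (\<exists>f. A = {x. \<exists>y. eval f [x] y})"

text \<open>A structure: universe (subset of omega) and interpretation of the binary relation.\<close>
type_synonym struc = "nat set \<times> (nat \<times> nat) set"

definition wf_struc :: "struc \<Rightarrow> bool" where
  "wf_struc A \<longleftrightarrow> snd A \<subseteq> fst A \<times> fst A"

text \<open>Atomic sentences with constants for elements of omega: equality and the relation.\<close>
datatype atom = Eq nat nat | Rel nat nat

text \<open>Literal: (True, a) is the atomic sentence a, (False, a) its negation.\<close>
type_synonym literal = "bool \<times> atom"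

definition diagram :: "struc \<Rightarrow> literal set" where
  "diagram A =
     {(True, Eq a b) | a b. a \<in> fst A \<and> b \<in> fst A \<and> a = b}
   \<union> {(False, Eq a b) | a b. a \<in> fst A \<and> b \<in> fst A \<and> a \<noteq> b}
   \<union> {(True, Rel a b) | a b. a \<in> fst A \<and> b \<in> fst A \<and> (a, b) \<in> snd A}
   \<union> {(False, Rel a b) | a b. a \<in> fst A \<and> b \<in> fst A \<and> (a, b) \<notin> snd A}"

definition iso :: "struc \<Rightarrow> struc \<Rightarrow> bool" where
  "iso A B \<longleftrightarrow> (\<exists>f. bij_betw f (fst A) (fst B) \<and>
      (\<forall>a \<in> fst A. \<forall>b \<in> fst A. (a, b) \<in> snd A \<longleftrightarrow> (f a, f b) \<in> snd B))"

definition FUG :: "struc set" where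
  "FUG = {A. wf_struc A \<and> finite (fst A) \<and> sym (snd A) \<and> irrefl (snd A)}"

definition FLO :: "struc set" where
  "FLO = {A. wf_struc A \<and> finite (fst A) \<and> strict_linear_order_on (fst A) (snd A)}"

fun enc_atom :: "atom \<Rightarrow> nat" where
  "enc_atom (Eq a b) = prod_encode (0, prod_encode (a, b))"
| "enc_atom (Rel a b) = prod_encode (1, prod_encode (a, b))"

definition enc_lit :: "literal \<Rightarrow> nat" where
  "enc_lit l = prod_encode (if fst l then 1 else 0, enc_atom (snd l))"

definition enc_pair :: "literal set \<times> literal \<Rightarrow> nat" where
  "enc_pair p = prod_encode (set_encode (enc_lit ` fst p), enc_lit (snd p))"

definition apply_trans :: "(literal set \<times> literal) set \<Rightarrow> struc \<Rightarrow> literal set" where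
  "apply_trans \<Phi> A = {\<phi>. \<exists>\<alpha>. \<alpha> \<subseteq> diagram A \<and> (\<alpha>, \<phi>) \<in> \<Phi>}"

definition comp_transformation ::
    "(literal set \<times> literal) set \<Rightarrow> struc set \<Rightarrow> struc set \<Rightarrow> bool" where
  "comp_transformation \<Phi> K K' \<longleftrightarrow>
     ce (enc_pair ` \<Phi>) \<and>
     (\<forall>(\<alpha>, \<phi>) \<in> \<Phi>. finite \<alpha> \<and>
        (\<exists>B. wf_struc B \<and> finite (fst B) \<and> \<alpha> \<subseteq> diagram B)) \<and>
     (\<forall>A \<in> K. \<exists>B \<in> K'. apply_trans \<Phi> A = diagram B)"

definition comp_embedding ::
    "(literal set \<times> literal) set \<Rightarrow> struc set \<Rightarrow> struc set \<Rightarrow> bool" where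
  "comp_embedding \<Phi> K K' \<longleftrightarrow>
     comp_transformation \<Phi> K K' \<and>
     (\<forall>A \<in> K. \<forall>A' \<in> K. \<forall>B \<in> K'. \<forall>B' \<in> K'.
        apply_trans \<Phi> A = diagram B \<longrightarrow> apply_trans \<Phi> A' = diagram B' \<longrightarrow>
        (iso A A' \<longleftrightarrow> iso B B'))"

definition c_reducible :: "struc set \<Rightarrow> struc set \<Rightarrow> bool" (infix "\<le>\<^sub>c" 50) where
  "K \<le>\<^sub>c K' \<longleftrightarrow> (\<exists>\<Phi>. comp_embedding \<Phi> K K')"

definition c_equivalent :: "struc set \<Rightarrow> struc set \<Rightarrow> bool" (infix "\<equiv>\<^sub>c" 50) where
  "K \<equiv>\<^sub>c K' \<longleftrightarrow> K \<le>\<^sub>c K' \<and> K' \<le>\<^sub>c K"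

end

theory Submission
  imports Defs
begin

(*
  FLO <= FUG.  Send a structure to the edgeless graph on the same universe.  Finite linear
  orders, like edgeless graphs, are isomorphic iff they have the same number of elements.

  FUG <= FLO, and in fact K <= FLO for every class K of finite structures.  A "relation table"
  of A is a list of k distinct elements t_0 ... t_(k-1) of A together with a number m < 2^(k*k)
  whose bit l1*k+l2 says whether (t_l1, t_l2) is in the relation; its value is 2^(k*k) + m.
  Each table found in A enumerates the diagram of the linear order of that length, so A is
  sent to the union of these diagrams, i.e. to the order whose length is the largest value
  V(A) (max_table_value below).  Values of tables of length k lie in [2^(k*k), 2^(k*k+1)), hence the maximum is
  attained only at enumerations of the whole universe, and V(A) determines both the size of A
  and a full relation table: V is a complete isomorphism invariant.
*)

section \<open>Total recursive functions and decidable predicates\<close>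

text \<open>Evaluation of a recursive function is deterministic; this is needed to read off
  the value of the least-zero search in the proof that projections of decidable sets are c.e.\<close>

lemma eval_deterministic: "eval f xs y \<Longrightarrow> eval f xs y' \<Longrightarrow> y = y'"
proof (induction arbitrary: y' rule: eval.induct)
  case (eval_Z xs)
  from eval_Z.prems show ?case by (cases rule: eval.cases) auto
next
  case (eval_S x xs)
  from eval_S.prems show ?case by (cases rule: eval.cases) auto
next
  case (eval_Id i xs)
  from eval_Id.prems show ?case by (cases rule: eval.cases) (use eval_Id.hyps in auto)
next
  case (eval_Cn ys gs xs f z)
  note outer = eval_Cn
  from eval_Cn.prems show ?case
  proof (cases rule: eval.cases)
    case (eval_Cn ys')
    have "ys = ys'"
      using outer eval_Cn by (intro nth_equalityI) auto
    then show ?thesis using outer eval_Cn by auto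
  qed
next
  case (eval_Pr0 f xs y g)
  from eval_Pr0.prems show ?case by (cases rule: eval.cases) (use eval_Pr0 in auto)
next
  case (eval_PrS f g n xs y z)
  from eval_PrS.prems show ?case by (cases rule: eval.cases) (use eval_PrS in auto)
next
  case (eval_Mn f n xs)
  note outer = eval_Mn
  from eval_Mn.prems show ?case
  proof (cases rule: eval.cases)
    case eval_Mn
    note inner = this
    (* both searches stop at the first zero, so neither stops before the other *)
    have "\<not> n < y'"
    proof
      assume "n < y'"
      then obtain y where "eval f (n # xs) (Suc y)" using inner by auto
      then show False using outer by fastforce
    qed
    moreover have "\<not> y' < n"
    proof
      assume "y' < n"
      then obtain y where "eval f (y' # xs) (Suc y)"
        and "\<And>y''. eval f (y' # xs) y'' \<Longrightarrow> Suc y = y''"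
        using outer by blast
      then show False using inner by fastforce
    qed
    ultimately show ?thesis by simp
  qed
qed

definition computable :: "nat \<Rightarrow> (nat list \<Rightarrow> nat) \<Rightarrow> bool" where
  "computable n F \<longleftrightarrow> (\<exists>r. \<forall>xs. length xs = n \<longrightarrow> eval r xs (F xs))"

definition decidable :: "nat \<Rightarrow> (nat list \<Rightarrow> bool) \<Rightarrow> bool" where
  "decidable n P \<longleftrightarrow> computable n (\<lambda>xs. if P xs then 1 else 0)"

lemma computable_cong:
  "computable n f \<Longrightarrow> (\<And>xs. length xs = n \<Longrightarrow> f xs = g xs) \<Longrightarrow> computable n g"
  unfolding computable_def by metis

lemma computable_zero: "computable n (\<lambda>_. 0)"
  unfolding computable_def using eval_Z by blast

lemma computable_proj: "i < n \<Longrightarrow> computable n (\<lambda>xs. xs ! i)"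
  unfolding computable_def using eval_Id by auto

lemma computable_compose:
  assumes "computable m f" and "\<And>i. i < m \<Longrightarrow> computable n (gs i)"
  shows "computable n (\<lambda>xs. f (map (\<lambda>i. gs i xs) [0..<m]))"
proof -
  obtain rf where rf: "\<forall>xs. length xs = m \<longrightarrow> eval rf xs (f xs)"
    using assms(1) computable_def by auto
  have "\<forall>i\<in>{..<m}. \<exists>r. \<forall>xs. length xs = n \<longrightarrow> eval r xs (gs i xs)"
    using assms(2) computable_def by auto
  then obtain R where R: "\<And>i. i < m \<Longrightarrow> \<forall>xs. length xs = n \<longrightarrow> eval (R i) xs (gs i xs)"
    by (metis lessThan_iff)
  show ?thesis unfolding computable_def
  proof (intro exI allI impI)
    fix xs :: "nat list" assume "length xs = n"
    show "eval (Cn rf (map R [0..<m])) xs (f (map (\<lambda>i. gs i xs) [0..<m]))"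
      by (rule eval_Cn[where ys="map (\<lambda>i. gs i xs) [0..<m]"]) (use rf R \<open>length xs = n\<close> in auto)
  qed
qed

lemma computable_compose1:
  "computable 1 f \<Longrightarrow> computable n g \<Longrightarrow> computable n (\<lambda>xs. f [g xs])"
  using computable_compose[of 1 f n "\<lambda>i. g"] by simp

lemma computable_compose2:
  "computable 2 f \<Longrightarrow> computable n g \<Longrightarrow> computable n h \<Longrightarrow> computable n (\<lambda>xs. f [g xs, h xs])"
  using computable_compose[of 2 f n "\<lambda>i. if i = 0 then g else h"]
  by (simp add: numeral_2_eq_2 less_Suc_eq)

lemma computable_Suc: "computable n f \<Longrightarrow> computable n (\<lambda>xs. Suc (f xs))"
proof -
  have "computable 1 (\<lambda>xs. Suc (xs ! 0))"
    unfolding computable_def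
    by (intro exI[of _ S] allI impI) (auto simp: length_Suc_conv intro: eval_S)
  then show "computable n f \<Longrightarrow> computable n (\<lambda>xs. Suc (f xs))"
    using computable_compose1 by fastforce
qed

lemma computable_const: "computable n (\<lambda>_. c)"
  by (induction c) (auto intro: computable_zero dest: computable_Suc)

lemma computable_tl: "computable n f \<Longrightarrow> computable (Suc n) (\<lambda>ys. f (tl ys))"
proof -
  assume f: "computable n f"
  have "computable (Suc n) (\<lambda>xs. f (map (\<lambda>i. xs ! Suc i) [0..<n]))"
    by (rule computable_compose[OF f]) (rule computable_proj, simp)
  moreover have "map (\<lambda>i. ys ! Suc i) [0..<n] = tl ys" if "length ys = Suc n" for ys :: "nat list"
    using that by (intro nth_equalityI) (auto simp: nth_tl)
  ultimately show ?thesis by (metis (no_types, lifting) computable_cong)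
qed

lemma computable_hd: "computable (Suc n) hd"
  by (rule computable_cong[OF computable_proj[of 0]]) (auto simp: length_Suc_conv)

lemma computable_cons:
  assumes h: "computable (Suc n) h" and g: "computable n g"
  shows "computable n (\<lambda>xs. h (g xs # xs))"
proof -
  let ?arg = "\<lambda>i xs. if i = 0 then g xs else xs ! (i - 1)"
  have "computable n (\<lambda>xs. h (map (\<lambda>i. ?arg i xs) [0..<Suc n]))"
  proof (rule computable_compose[OF h])
    fix i assume "i < Suc n"
    then show "computable n (?arg i)" using g by (cases "i = 0") (auto intro: computable_proj)
  qed
  moreover have "map (\<lambda>i. ?arg i xs) [0..<Suc n] = g xs # xs" if "length xs = n" for xs
    using that by (intro nth_equalityI) (auto simp del: upt_Suc simp: nth_Cons')
  ultimately show ?thesis by (metis (no_types, lifting) computable_cong)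
qed

fun prim_rec :: "(nat list \<Rightarrow> nat) \<Rightarrow> (nat list \<Rightarrow> nat) \<Rightarrow> nat \<Rightarrow> nat list \<Rightarrow> nat" where
  "prim_rec f g 0 ys = f ys"
| "prim_rec f g (Suc k) ys = g (prim_rec f g k ys # k # ys)"

lemma computable_prim_rec:
  assumes "computable n f" and "computable (Suc (Suc n)) g"
  shows "computable (Suc n) (\<lambda>xs. prim_rec f g (hd xs) (tl xs))"
proof -
  obtain rf where rf: "\<forall>xs. length xs = n \<longrightarrow> eval rf xs (f xs)"
    using assms(1) computable_def by auto
  obtain rg where rg: "\<forall>xs. length xs = Suc (Suc n) \<longrightarrow> eval rg xs (g xs)"
    using assms(2) computable_def by auto
  have Pr: "eval (Pr rf rg) (k # ys) (prim_rec f g k ys)" if "length ys = n" for k ys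
    using that
  proof (induction k)
    case 0 then show ?case using rf by (auto intro: eval_Pr0)
  next
    case (Suc k)
    show ?case by (rule eval_PrS[OF Suc.IH[OF Suc.prems]]) (use rg Suc.prems in auto)
  qed
  show ?thesis unfolding computable_def
  proof (intro exI allI impI)
    fix xs :: "nat list" assume "length xs = Suc n"
    then show "eval (Pr rf rg) xs (prim_rec f g (hd xs) (tl xs))"
      using Pr[of "tl xs" "hd xs"] by (cases xs) auto
  qed
qed

lemma computable_binary_prim_rec:
  assumes "computable 1 f" and "computable 3 g"
    and "\<And>k y. prim_rec f g k [y] = F k y"
  shows "computable 2 (\<lambda>xs. F (xs ! 0) (xs ! 1))"
proof -
  have "computable 2 (\<lambda>xs. prim_rec f g (hd xs) (tl xs))"
    using computable_prim_rec[of 1 f g] assms(1,2) by (simp add: numeral_2_eq_2 numeral_3_eq_3)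
  then show ?thesis
    by (rule computable_cong) (auto simp: assms(3) numeral_2_eq_2 length_Suc_conv)
qed

lemma computable_add: "computable n f \<Longrightarrow> computable n g \<Longrightarrow> computable n (\<lambda>xs. f xs + g xs)"
proof -
  have eq: "prim_rec (\<lambda>ys. ys ! 0) (\<lambda>zs. Suc (zs ! 0)) k [y] = k + y" for k y
    by (induction k) auto
  have "computable 2 ((\<lambda>xs. xs ! 0 + xs ! 1))"
    by (rule computable_binary_prim_rec[OF _ _ eq]; intro computable_proj computable_Suc; simp)
  then show "computable n f \<Longrightarrow> computable n g \<Longrightarrow> computable n (\<lambda>xs. f xs + g xs)"
    using computable_compose2 by fastforce
qed

lemma computable_mult: "computable n f \<Longrightarrow> computable n g \<Longrightarrow> computable n (\<lambda>xs. f xs * g xs)"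
proof -
  have eq: "prim_rec (\<lambda>_. 0) (\<lambda>zs. zs ! 0 + zs ! 2) k [y] = k * y" for k y
    by (induction k) auto
  have "computable 2 ((\<lambda>xs. xs ! 0 * xs ! 1))"
    by (rule computable_binary_prim_rec[OF _ _ eq]; intro computable_proj computable_add computable_zero; simp)
  then show "computable n f \<Longrightarrow> computable n g \<Longrightarrow> computable n (\<lambda>xs. f xs * g xs)"
    using computable_compose2 by fastforce
qed

lemma computable_pred: "computable n f \<Longrightarrow> computable n (\<lambda>xs. f xs - 1)"
proof -
  have eq: "prim_rec (\<lambda>_. 0) (\<lambda>zs. zs ! 1) k [] = k - 1" for k
    by (induction k) auto
  have "computable 1 (\<lambda>xs. prim_rec (\<lambda>_. 0) (\<lambda>zs. zs ! 1) (hd xs) (tl xs))"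
    using computable_prim_rec[of 0 "\<lambda>_. 0" "\<lambda>zs. zs ! 1"]
    by (simp add: numeral_2_eq_2 computable_zero computable_proj)
  then have "computable 1 (\<lambda>xs. xs ! 0 - 1)"
    by (rule computable_cong) (auto simp: eq[simplified] length_Suc_conv)
  then show "computable n f \<Longrightarrow> computable n (\<lambda>xs. f xs - 1)"
    using computable_compose1 by fastforce
qed

lemma computable_minus: "computable n f \<Longrightarrow> computable n g \<Longrightarrow> computable n (\<lambda>xs. f xs - g xs)"
proof -
  have eq: "prim_rec (\<lambda>ys. ys ! 0) (\<lambda>zs. zs ! 0 - 1) k [y] = y - k" for k y
    by (induction k) auto
  have "computable 2 ((\<lambda>xs. xs ! 1 - xs ! 0))"
    by (rule computable_binary_prim_rec[OF _ _ eq]; intro computable_proj computable_pred; simp)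
  then show "computable n f \<Longrightarrow> computable n g \<Longrightarrow> computable n (\<lambda>xs. f xs - g xs)"
    using computable_compose2[of "\<lambda>xs. xs ! 1 - xs ! 0" n g f] by simp
qed

lemma computable_power: "computable n f \<Longrightarrow> computable n g \<Longrightarrow> computable n (\<lambda>xs. f xs ^ g xs)"
proof -
  have eq: "prim_rec (\<lambda>_. 1) (\<lambda>zs. zs ! 0 * zs ! 2) k [y] = y ^ k" for k y
    by (induction k) auto
  have "computable 2 ((\<lambda>xs. xs ! 1 ^ xs ! 0))"
    by (rule computable_binary_prim_rec[OF _ _ eq]; intro computable_proj computable_mult computable_const; simp)
  then show "computable n f \<Longrightarrow> computable n g \<Longrightarrow> computable n (\<lambda>xs. f xs ^ g xs)"
    using computable_compose2[of "\<lambda>xs. xs ! 1 ^ xs ! 0" n g f] by simp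
qed

lemma decidable_eq:
  assumes "computable n f" and "computable n g"
  shows "decidable n (\<lambda>xs. f xs = g xs)"
proof -
  have "computable n (\<lambda>xs. 1 - ((f xs - g xs) + (g xs - f xs)))"
    by (intro computable_minus computable_add computable_const assms)
  then show ?thesis unfolding decidable_def by (rule computable_cong) auto
qed

lemma decidable_less:
  assumes "computable n f" and "computable n g"
  shows "decidable n (\<lambda>xs. f xs < g xs)"
proof -
  have "computable n (\<lambda>xs. 1 - (1 - (g xs - f xs)))"
    by (intro computable_minus computable_const assms)
  then show ?thesis unfolding decidable_def by (rule computable_cong) auto
qed

lemma decidable_not: "decidable n P \<Longrightarrow> decidable n (\<lambda>xs. \<not> P xs)"
  unfolding decidable_def
  by (rule computable_cong[OF computable_minus[OF computable_const[of n 1]]]) auto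

lemma decidable_conj: "decidable n P \<Longrightarrow> decidable n Q \<Longrightarrow> decidable n (\<lambda>xs. P xs \<and> Q xs)"
  unfolding decidable_def
  by (rule computable_cong[OF computable_mult[of n "\<lambda>xs. if P xs then 1 else 0"
        "\<lambda>xs. if Q xs then 1 else 0"]]) auto

lemma decidable_disj: "decidable n P \<Longrightarrow> decidable n Q \<Longrightarrow> decidable n (\<lambda>xs. P xs \<or> Q xs)"
  using decidable_not[of n "\<lambda>xs. \<not> P xs \<and> \<not> Q xs"] decidable_conj decidable_not by fastforce

lemma decidable_imp: "decidable n P \<Longrightarrow> decidable n Q \<Longrightarrow> decidable n (\<lambda>xs. P xs \<longrightarrow> Q xs)"
  using decidable_disj[of n "\<lambda>xs. \<not> P xs"] decidable_not by fastforce

lemma computable_if: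
  assumes "decidable n P" and "computable n f" and "computable n g"
  shows "computable n (\<lambda>xs. if P xs then f xs else g xs)"
proof -
  let ?p = "\<lambda>xs. if P xs then 1 else 0 :: nat"
  have "computable n (\<lambda>xs. ?p xs * f xs + (1 - ?p xs) * g xs)"
    by (intro computable_add computable_mult computable_minus computable_const
        assms(1)[unfolded decidable_def] assms(2,3))
  then show ?thesis by (rule computable_cong) auto
qed

lemma computable_mod: "computable n f \<Longrightarrow> computable n g \<Longrightarrow> computable n (\<lambda>xs. f xs mod g xs)"
proof -
  have eq: "prim_rec (\<lambda>_. 0) (\<lambda>zs. if Suc (zs ! 0) = zs ! 2 then 0 else Suc (zs ! 0)) k [d]
      = k mod d" for k d
    by (induction k) (auto simp: mod_Suc)
  have "computable 2 (\<lambda>xs. xs ! 0 mod xs ! 1)"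
    by (rule computable_binary_prim_rec[OF _ _ eq]; intro computable_proj computable_if
        decidable_eq computable_Suc computable_const; simp)
  then show "computable n f \<Longrightarrow> computable n g \<Longrightarrow> computable n (\<lambda>xs. f xs mod g xs)"
    using computable_compose2 by fastforce
qed

lemma computable_div: "computable n f \<Longrightarrow> computable n g \<Longrightarrow> computable n (\<lambda>xs. f xs div g xs)"
proof -
  have eq: "prim_rec (\<lambda>_. 0) (\<lambda>zs. if Suc (zs ! 1) mod zs ! 2 = 0 then Suc (zs ! 0) else zs ! 0) k [d]
      = k div d" for k d
    by (induction k) (auto simp: div_Suc)
  have "computable 2 (\<lambda>xs. xs ! 0 div xs ! 1)"
    by (rule computable_binary_prim_rec[OF _ _ eq]; intro computable_proj computable_if
        decidable_eq computable_Suc computable_const computable_mod; simp)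
  then show "computable n f \<Longrightarrow> computable n g \<Longrightarrow> computable n (\<lambda>xs. f xs div g xs)"
    using computable_compose2 by fastforce
qed

lemma computable_prod_encode:
  "computable n f \<Longrightarrow> computable n g \<Longrightarrow> computable n (\<lambda>xs. prod_encode (f xs, g xs))"
  unfolding prod_encode_def triangle_def
  by (auto intro!: computable_add computable_mult computable_div computable_Suc computable_const)

lemma computable_sum:
  assumes "computable (Suc n) (\<lambda>ys. F (hd ys) (tl ys))" and "computable n g"
  shows "computable n (\<lambda>xs. \<Sum>i<g xs. F i xs)"
proof -
  let ?step = "\<lambda>zs. zs ! 0 + F (zs ! 1) (tl (tl zs))"
  have "computable (Suc (Suc n)) (\<lambda>zs. zs ! 0 + (\<lambda>ys. F (hd ys) (tl ys)) (tl zs))"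
    by (intro computable_add computable_proj computable_tl assms(1)) simp
  then have "computable (Suc (Suc n)) ?step"
    by (rule computable_cong) (auto simp: length_Suc_conv)
  then have "computable (Suc n) (\<lambda>xs. prim_rec (\<lambda>_. 0) ?step (hd xs) (tl xs))"
    by (intro computable_prim_rec computable_zero)
  then have "computable n (\<lambda>xs. prim_rec (\<lambda>_. 0) ?step (g xs) xs)"
    using computable_cons[OF _ assms(2)] by fastforce
  moreover have "prim_rec (\<lambda>_. 0) ?step k xs = (\<Sum>i<k. F i xs)" for k xs
    by (induction k) auto
  ultimately show ?thesis by simp
qed

lemma decidable_bex:
  assumes "decidable (Suc n) (\<lambda>ys. P (hd ys) (tl ys))" and "computable n g"
  shows "decidable n (\<lambda>xs. \<exists>i<g xs. P i xs)"
proof -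
  let ?count = "\<lambda>xs. \<Sum>i<g xs. if P i xs then 1 else 0 :: nat"
  have "computable n (\<lambda>xs. 1 - (1 - ?count xs))"
    by (intro computable_minus computable_const computable_sum assms(2))
      (use assms(1) in \<open>simp add: decidable_def\<close>)
  moreover have "1 - (1 - ?count xs) = (if \<exists>i<g xs. P i xs then 1 else 0)" for xs
  proof (cases "\<exists>i<g xs. P i xs")
    case True
    then obtain j where "j < g xs" "P j xs" by blast
    then have "(if P j xs then 1 else 0) \<le> ?count xs"
      by (intro member_le_sum) auto
    then show ?thesis using True \<open>P j xs\<close> by simp
  qed simp
  ultimately show ?thesis unfolding decidable_def by simp
qed

lemma decidable_ball:
  assumes "decidable (Suc n) (\<lambda>ys. P (hd ys) (tl ys))" and "computable n g"
  shows "decidable n (\<lambda>xs. \<forall>i<g xs. P i xs)"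
proof -
  have "decidable n (\<lambda>xs. \<not> (\<exists>i<g xs. \<not> P i xs))"
    by (intro decidable_not decidable_bex[where P="\<lambda>i xs. \<not> P i xs"] assms(2))
      (use assms(1) decidable_not in auto)
  then show ?thesis by simp
qed

text \<open>The projection of a decidable binary relation is c.e.: it is the domain of the
  unbounded search for a witness.\<close>

lemma ce_projection:
  assumes "decidable 2 (\<lambda>xs. P (xs ! 0) (xs ! 1))"
  shows "ce {x. \<exists>c. P c x}"
proof -
  have "decidable 2 (\<lambda>xs. \<not> P (xs ! 0) (xs ! 1))" using assms by (rule decidable_not)
  then obtain r where "\<forall>xs. length xs = 2 \<longrightarrow> eval r xs (if \<not> P (xs ! 0) (xs ! 1) then 1 else 0)"
    unfolding decidable_def computable_def by blast
  then have r: "eval r [c, x] (if P c x then 0 else 1)" for c x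
    by (auto dest: spec[of _ "[c, x]"])
  have "(\<exists>c. P c x) \<longleftrightarrow> (\<exists>y. eval (Mn r) [x] y)" for x
  proof
    assume "\<exists>c. P c x"
    define n where "n = (LEAST c. P c x)"
    have least: "P n x" and below: "\<And>m. m < n \<Longrightarrow> \<not> P m x"
      unfolding n_def using \<open>\<exists>c. P c x\<close> by (auto intro: LeastI dest: not_less_Least)
    have "eval (Mn r) [x] n"
    proof (rule eval_Mn)
      show "eval r [n, x] 0" using r[of n x] least by simp
      show "\<forall>m<n. \<exists>y. eval r [m, x] (Suc y)"
      proof (intro allI impI)
        fix m assume "m < n"
        then show "\<exists>y. eval r [m, x] (Suc y)" using r[of m x] below[of m] by auto
      qed
    qed
    then show "\<exists>y. eval (Mn r) [x] y" by blast
  next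
    assume "\<exists>y. eval (Mn r) [x] y"
    then obtain y where "eval (Mn r) [x] y" by blast
    then have "eval r [y, x] 0" by (cases rule: eval.cases) auto
    then have "P y x" using eval_deterministic[OF r[of y x]] by (cases "P y x") auto
    then show "\<exists>c. P c x" by blast
  qed
  then show ?thesis unfolding ce_def by blast
qed

lemma diagram_iff [simp]:
  "(p, Eq a b) \<in> diagram A \<longleftrightarrow> a \<in> fst A \<and> b \<in> fst A \<and> (a = b) = p"
  "(p, Rel a b) \<in> diagram A \<longleftrightarrow> a \<in> fst A \<and> b \<in> fst A \<and> ((a, b) \<in> snd A) = p"
  by (cases p; auto simp: diagram_def)+

text \<open>A well-formed structure is determined by its atomic diagram; this identifies the image
  structure of a transformation from its output diagram.\<close>

lemma diagram_inj:
  assumes "wf_struc A" and "wf_struc B" and "diagram A = diagram B"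
  shows "A = B"
proof -
  have "fst A = fst B"
    using assms(3) diagram_iff(1)[of True _ _ A] diagram_iff(1)[of True _ _ B] by blast
  moreover have "(a, b) \<in> snd A \<longleftrightarrow> (a, b) \<in> snd B" for a b
    using assms diagram_iff(2)[of True a b A] diagram_iff(2)[of True a b B]
    by (auto simp: wf_struc_def)
  ultimately show ?thesis by (simp add: prod_eq_iff set_eq_iff)
qed

definition iso_via :: "(nat \<Rightarrow> nat) \<Rightarrow> struc \<Rightarrow> struc \<Rightarrow> bool" where
  "iso_via f A B \<longleftrightarrow> bij_betw f (fst A) (fst B) \<and>
     (\<forall>a \<in> fst A. \<forall>b \<in> fst A. (a, b) \<in> snd A \<longleftrightarrow> (f a, f b) \<in> snd B)"

lemma iso_iff_iso_via: "iso A B \<longleftrightarrow> (\<exists>f. iso_via f A B)"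
  unfolding iso_def iso_via_def ..

lemma iso_via_inv:
  assumes "iso_via f A B"
  shows "iso_via (inv_into (fst A) f) B A"
proof -
  let ?g = "inv_into (fst A) f"
  have f: "bij_betw f (fst A) (fst B)" using assms unfolding iso_via_def by blast
  then have g: "bij_betw ?g (fst B) (fst A)" by (rule bij_betw_inv_into)
  have "(a, b) \<in> snd B \<longleftrightarrow> (?g a, ?g b) \<in> snd A" if "a \<in> fst B" "b \<in> fst B" for a b
  proof -
    have "?g a \<in> fst A" "?g b \<in> fst A" "f (?g a) = a" "f (?g b) = b"
      using that g f by (auto simp: bij_betw_def f_inv_into_f)
    then show ?thesis using assms unfolding iso_via_def by metis
  qed
  then show ?thesis unfolding iso_via_def using g by blast
qed

lemma iso_via_comp:
  assumes "iso_via f A B" and "iso_via g B C"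
  shows "iso_via (g \<circ> f) A C"
proof -
  have f: "bij_betw f (fst A) (fst B)" and g: "bij_betw g (fst B) (fst C)"
    using assms unfolding iso_via_def by blast+
  have "(a, b) \<in> snd A \<longleftrightarrow> (g (f a), g (f b)) \<in> snd C" if "a \<in> fst A" "b \<in> fst A" for a b
  proof -
    have "f a \<in> fst B" "f b \<in> fst B" using that f by (auto simp: bij_betw_def)
    then show ?thesis using that assms unfolding iso_via_def by simp
  qed
  then show ?thesis using bij_betw_trans[OF f g] unfolding iso_via_def by simp
qed

lemma iso_sym: "iso A B \<Longrightarrow> iso B A"
  unfolding iso_iff_iso_via using iso_via_inv by blast

lemma iso_trans: "iso A B \<Longrightarrow> iso B C \<Longrightarrow> iso A C"
  unfolding iso_iff_iso_via using iso_via_comp by blast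

lemma iso_card: "iso A B \<Longrightarrow> card (fst A) = card (fst B)"
  unfolding iso_def using bij_betw_same_card by blast

lemma iso_empty_rel_iff:
  assumes "finite U" and "finite U'"
  shows "iso (U, {}) (U', {}) \<longleftrightarrow> card U = card U'"
proof
  assume "card U = card U'"
  then obtain f where "bij_betw f U U'" using assms by (metis bij_betw_iff_card)
  then show "iso (U, {}) (U', {})" unfolding iso_def by auto
qed (use iso_card in fastforce)

section \<open>Finite linear orders\<close>

definition std_order :: "nat \<Rightarrow> struc" where
  "std_order N = ({..<N}, {(i, j). i < j \<and> j < N})"

lemma std_order_FLO: "std_order N \<in> FLO"
  unfolding FLO_def std_order_def wf_struc_def strict_linear_order_on_def
  by (auto simp: trans_def irrefl_def total_on_def)

lemma diagram_std_order:
  "diagram (std_order N) = {(i = j, Eq i j) | i j. i < N \<and> j < N} \<union> {(i < j, Rel i j) | i j. i < N \<and> j < N}"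
proof (rule set_eqI)
  fix l :: literal
  obtain p at where "l = (p, at)" by force
  then show "l \<in> diagram (std_order N) \<longleftrightarrow>
      l \<in> {(i = j, Eq i j) | i j. i < N \<and> j < N} \<union> {(i < j, Rel i j) | i j. i < N \<and> j < N}"
    by (cases at) (auto simp: std_order_def)
qed

text \<open>Shorter standard orders are substructures of longer ones, so their diagrams grow.\<close>

lemma diagram_std_order_mono: "M \<le> N \<Longrightarrow> diagram (std_order M) \<subseteq> diagram (std_order N)"
  unfolding diagram_std_order by auto

lemma iso_std_order_iff: "iso (std_order M) (std_order N) \<longleftrightarrow> M = N"
proof
  assume "iso (std_order M) (std_order N)"
  then show "M = N" using iso_card by (fastforce simp: std_order_def)
qed (auto simp: iso_def intro: exI[of _ id])

text \<open>In a finite strict linear order, the rank of an element is the number of its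
  predecessors; it is strictly monotone and maps the universe onto an initial segment.\<close>

definition rank :: "struc \<Rightarrow> nat \<Rightarrow> nat" where
  "rank A a = card {b \<in> fst A. (b, a) \<in> snd A}"

lemma rank_less:
  assumes "A \<in> FLO" and "(a, b) \<in> snd A"
  shows "rank A a < rank A b"
proof -
  have fin: "finite (fst A)" and wf: "snd A \<subseteq> fst A \<times> fst A"
    and tr: "trans (snd A)" and irr: "irrefl (snd A)"
    using assms(1) by (auto simp: FLO_def wf_struc_def strict_linear_order_on_def)
  have "{c \<in> fst A. (c, a) \<in> snd A} \<subset> {c \<in> fst A. (c, b) \<in> snd A}"
  proof
    show "{c \<in> fst A. (c, a) \<in> snd A} \<subseteq> {c \<in> fst A. (c, b) \<in> snd A}"
      using tr assms(2) by (auto dest: transD)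
    have "a \<in> fst A" "(a, a) \<notin> snd A" using assms(2) wf irr by (auto simp: irrefl_def)
    then show "{c \<in> fst A. (c, a) \<in> snd A} \<noteq> {c \<in> fst A. (c, b) \<in> snd A}"
      using assms(2) by blast
  qed
  then show ?thesis unfolding rank_def by (rule psubset_card_mono[rotated]) (use fin in auto)
qed

lemma FLO_iso_std_order:
  assumes "A \<in> FLO"
  shows "iso A (std_order (card (fst A)))"
proof -
  let ?U = "fst A" and ?R = "snd A" and ?N = "card (fst A)"
  have fin: "finite ?U" and irr: "irrefl ?R" and tot: "total_on ?U ?R"
    using assms by (auto simp: FLO_def strict_linear_order_on_def)
  have below: "rank A a < ?N" if "a \<in> ?U" for a
  proof -
    have "{b \<in> ?U. (b, a) \<in> ?R} \<subset> ?U" using that irr by (auto simp: irrefl_def)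
    then show ?thesis unfolding rank_def using fin by (rule psubset_card_mono[rotated])
  qed
  have order: "(a, b) \<in> ?R \<longleftrightarrow> rank A a < rank A b" if "a \<in> ?U" "b \<in> ?U" for a b
    using that tot rank_less[OF assms] by (auto simp: total_on_def) (metis less_asym)
  have inj: "inj_on (rank A) ?U"
    by (rule inj_onI) (use tot rank_less[OF assms] in \<open>auto simp: total_on_def, metis less_irrefl\<close>)
  have "rank A ` ?U = {..<?N}"
    using below card_image[OF inj] by (intro card_subset_eq) auto
  then have "bij_betw (rank A) ?U {..<?N}" using inj by (simp add: bij_betw_def)
  then show ?thesis unfolding iso_def using order below by (auto simp: std_order_def)
qed

lemma FLO_iso_iff:
  assumes "A \<in> FLO" and "A' \<in> FLO"
  shows "iso A A' \<longleftrightarrow> card (fst A) = card (fst A')"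
proof
  assume "card (fst A) = card (fst A')"
  then show "iso A A'"
    using FLO_iso_std_order[OF assms(1)] FLO_iso_std_order[OF assms(2)]
    by (metis iso_sym iso_trans)
qed (rule iso_card)

text \<open>The number coding a literal with polarity bit p, kind bit t (0 for equality, 1 for the
  relation) and constants a, b.\<close>

abbreviation lit_code :: "nat \<Rightarrow> nat \<Rightarrow> nat \<Rightarrow> nat \<Rightarrow> nat" where
  "lit_code p t a b \<equiv> prod_encode (p, prod_encode (t, prod_encode (a, b)))"

lemma enc_lit_code:
  "enc_lit (p, Eq a b) = lit_code (if p then 1 else 0) 0 a b"
  "enc_lit (p, Rel a b) = lit_code (if p then 1 else 0) 1 a b"
  by (simp_all add: enc_lit_def)

lemma inj_enc_lit: "inj enc_lit"
proof (rule injI)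
  fix l l' :: literal
  assume "enc_lit l = enc_lit l'"
  moreover obtain p a p' a' where "l = (p, a)" "l' = (p', a')" by force
  moreover have "enc_atom a = enc_atom a' \<Longrightarrow> a = a'" by (cases a; cases a') auto
  ultimately show "l = l'" unfolding enc_lit_def by (auto split: if_splits)
qed

section \<open>FLO embeds into FUG: edgeless graphs\<close>

definition edgeless :: "(literal set \<times> literal) set" where
  "edgeless =
     {({(True, Eq a a)}, (True, Eq a a)) | a. True}
   \<union> {({(False, Eq a b)}, (False, Eq a b)) | a b. a \<noteq> b}
   \<union> {({(True, Eq a a)}, (False, Rel a a)) | a. True}
   \<union> {({(False, Eq a b)}, (False, Rel a b)) | a b. a \<noteq> b}"

lemma apply_edgeless: "apply_trans edgeless A = diagram (fst A, {})"
proof (rule set_eqI)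
  fix l :: literal
  obtain p at where l: "l = (p, at)" by force
  show "l \<in> apply_trans edgeless A \<longleftrightarrow> l \<in> diagram (fst A, {})"
  proof (cases at)
    case (Eq a b)
    then show ?thesis unfolding l apply_trans_def edgeless_def by (cases p) auto
  next
    case (Rel a b)
    then show ?thesis unfolding l apply_trans_def edgeless_def by (cases p; cases "a = b") auto
  qed
qed

lemma edgeless_premises:
  assumes "(\<alpha>, \<phi>) \<in> edgeless"
  shows "finite \<alpha> \<and> (\<exists>B. wf_struc B \<and> finite (fst B) \<and> \<alpha> \<subseteq> diagram B)"
proof -
  obtain a b where "\<alpha> = {(True, Eq a a)} \<or> (\<alpha> = {(False, Eq a b)} \<and> a \<noteq> b)"
    using assms unfolding edgeless_def by blast
  then have "\<alpha> \<subseteq> diagram ({a, b}, {})" by auto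
  moreover have "finite \<alpha>" using assms unfolding edgeless_def by auto
  ultimately show ?thesis by (intro conjI exI[of _ "({a, b}, {})"]) (auto simp: wf_struc_def)
qed

definition edgeless_code :: "nat \<Rightarrow> nat \<Rightarrow> nat \<Rightarrow> bool" where
  "edgeless_code a b x \<longleftrightarrow>
       x = prod_encode (2 ^ lit_code 1 0 a a, lit_code 1 0 a a)
     \<or> (a \<noteq> b \<and> x = prod_encode (2 ^ lit_code 0 0 a b, lit_code 0 0 a b))
     \<or> x = prod_encode (2 ^ lit_code 1 0 a a, lit_code 0 1 a a)
     \<or> (a \<noteq> b \<and> x = prod_encode (2 ^ lit_code 0 0 a b, lit_code 0 1 a b))"

lemma enc_pair_singleton: "enc_pair ({l}, l') = prod_encode (2 ^ enc_lit l, enc_lit l')"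
  by (simp add: enc_pair_def)

lemma enc_edgeless: "enc_pair ` edgeless = {x. \<exists>c. \<exists>a<c. \<exists>b<c. edgeless_code a b x}"
proof -
  have "enc_pair ` edgeless = {x. \<exists>a b. edgeless_code a b x}"
  proof (rule set_eqI, rule iffI)
    fix x assume "x \<in> enc_pair ` edgeless"
    then show "x \<in> {x. \<exists>a b. edgeless_code a b x}"
      unfolding edgeless_def edgeless_code_def by (auto simp: enc_pair_singleton enc_lit_code)
  next
    fix x assume "x \<in> {x. \<exists>a b. edgeless_code a b x}"
    then obtain a b where "edgeless_code a b x" by blast
    then show "x \<in> enc_pair ` edgeless"
      unfolding edgeless_code_def
    proof (elim disjE conjE)
      assume "x = prod_encode (2 ^ lit_code 1 0 a a, lit_code 1 0 a a)"
      then show ?thesis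
        by (intro image_eqI[of _ _ "({(True, Eq a a)}, (True, Eq a a))"])
          (auto simp: edgeless_def enc_pair_singleton enc_lit_code)
    next
      assume "a \<noteq> b" "x = prod_encode (2 ^ lit_code 0 0 a b, lit_code 0 0 a b)"
      then show ?thesis
        by (intro image_eqI[of _ _ "({(False, Eq a b)}, (False, Eq a b))"])
          (auto simp: edgeless_def enc_pair_singleton enc_lit_code)
    next
      assume "x = prod_encode (2 ^ lit_code 1 0 a a, lit_code 0 1 a a)"
      then show ?thesis
        by (intro image_eqI[of _ _ "({(True, Eq a a)}, (False, Rel a a))"])
          (auto simp: edgeless_def enc_pair_singleton enc_lit_code)
    next
      assume "a \<noteq> b" "x = prod_encode (2 ^ lit_code 0 0 a b, lit_code 0 1 a b)"
      then show ?thesis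
        by (intro image_eqI[of _ _ "({(False, Eq a b)}, (False, Rel a b))"])
          (auto simp: edgeless_def enc_pair_singleton enc_lit_code)
    qed
  qed
  also have "\<dots> = {x. \<exists>c. \<exists>a<c. \<exists>b<c. edgeless_code a b x}"
  proof (intro Collect_cong iffI)
    fix x assume "\<exists>a b. edgeless_code a b x"
    then obtain a b where "edgeless_code a b x" by blast
    moreover have "a < Suc (a + b)" "b < Suc (a + b)" by simp_all
    ultimately show "\<exists>c. \<exists>a<c. \<exists>b<c. edgeless_code a b x" by blast
  qed blast
  finally show ?thesis .
qed

lemma ce_edgeless: "ce (enc_pair ` edgeless)"
  unfolding enc_edgeless edgeless_code_def
  by (rule ce_projection)
    (intro decidable_bex decidable_disj decidable_conj decidable_eq decidable_not
      computable_prod_encode computable_power computable_const computable_hd computable_tl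
      computable_proj; simp?)

lemma le_FUG_if_iso_iff_card:
  assumes finite: "\<forall>A\<in>K. finite (fst A)"
    and classified: "\<forall>A\<in>K. \<forall>A'\<in>K. iso A A' \<longleftrightarrow> card (fst A) = card (fst A')"
  shows "K \<le>\<^sub>c FUG"
  unfolding c_reducible_def
proof (intro exI[of _ edgeless])
  have edgeless_in_FUG: "(fst A, {}) \<in> FUG" if "A \<in> K" for A
    using that finite by (auto simp: FUG_def wf_struc_def sym_on_def irrefl_def)
  have output_graph: "B = (fst A, {})" if "A \<in> K" "B \<in> FUG" "apply_trans edgeless A = diagram B" for A B
    using that edgeless_in_FUG by (intro diagram_inj) (auto simp: apply_edgeless FUG_def)
  show "comp_embedding edgeless K FUG"
    unfolding comp_embedding_def comp_transformation_def
  proof (intro conjI ballI allI impI)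
    show "ce (enc_pair ` edgeless)" by (rule ce_edgeless)
  next
    fix p assume "p \<in> edgeless"
    then show "case p of (\<alpha>, \<phi>) \<Rightarrow> finite \<alpha> \<and> (\<exists>B. wf_struc B \<and> finite (fst B) \<and> \<alpha> \<subseteq> diagram B)"
      using edgeless_premises by (cases p) simp
  next
    fix A assume "A \<in> K"
    then show "\<exists>B\<in>FUG. apply_trans edgeless A = diagram B"
      using edgeless_in_FUG apply_edgeless by blast
  next
    fix A A' B B' assume "A \<in> K" "A' \<in> K" "B \<in> FUG" "B' \<in> FUG"
      "apply_trans edgeless A = diagram B" "apply_trans edgeless A' = diagram B'"
    then have "B = (fst A, {})" and "B' = (fst A', {})" using output_graph by blast+
    then show "iso A A' \<longleftrightarrow> iso B B'"
      using \<open>A \<in> K\<close> \<open>A' \<in> K\<close> classified finite iso_empty_rel_iff by simp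
  qed
qed

section \<open>Every class of finite structures embeds into FLO\<close>

definition describes :: "struc \<Rightarrow> nat list \<Rightarrow> nat \<Rightarrow> bool" where
  "describes A ts m \<longleftrightarrow> distinct ts \<and> set ts \<subseteq> fst A \<and> m < 2 ^ (length ts * length ts) \<and>
     (\<forall>l1<length ts. \<forall>l2<length ts.
        (ts ! l1, ts ! l2) \<in> snd A \<longleftrightarrow> odd (m div 2 ^ (l1 * length ts + l2)))"

lemma describes_length_le:
  assumes "describes A ts m" and "finite (fst A)"
  shows "length ts \<le> card (fst A)"
proof -
  have "distinct ts" "set ts \<subseteq> fst A" using assms(1) unfolding describes_def by auto
  then have "card (set ts) \<le> card (fst A)" "card (set ts) = length ts"
    using card_mono[OF assms(2)] distinct_card by auto
  then show ?thesis by simp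
qed

lemma pair_index_less: "(l1::nat) < k \<Longrightarrow> l2 < k \<Longrightarrow> l1 * k + l2 < k * k"
proof -
  assume "l1 < k" "l2 < k"
  then have "l1 * k + l2 < Suc l1 * k" by simp
  also have "\<dots> \<le> k * k" using \<open>l1 < k\<close> by (metis Suc_leI mult_le_mono1)
  finally show ?thesis .
qed

lemma pair_index_inj:
  fixes l1 l2 l1' l2' k :: nat
  assumes "l2 < k" and "l2' < k" and "l1 * k + l2 = l1' * k + l2'"
  shows "l1 = l1' \<and> l2 = l2'"
proof -
  have "l1 = (l1 * k + l2) div k" and "l2 = (l1 * k + l2) mod k"
    using assms(1) by simp_all
  then show ?thesis unfolding assms(3) using assms(2) by simp
qed

lemma set_encode_less: "X \<subseteq> {..<N} \<Longrightarrow> set_encode X < 2 ^ N"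
proof -
  assume "X \<subseteq> {..<N}"
  then have "set_encode X \<le> (\<Sum>i=0..<N. 2 ^ i)"
    unfolding set_encode_def by (intro sum_mono2) auto
  also have "\<dots> < 2 ^ N" by (simp add: sum_power2)
  finally show ?thesis .
qed

lemma describes_full:
  assumes "finite (fst A)"
  shows "\<exists>ts m. describes A ts m \<and> length ts = card (fst A)"
proof -
  define ts where "ts = sorted_list_of_set (fst A)"
  define k where "k = length ts"
  have ts: "distinct ts" "set ts = fst A" "length ts = card (fst A)"
    using assms unfolding ts_def by auto
  define S where "S = {l1 * k + l2 | l1 l2. l1 < k \<and> l2 < k \<and> (ts ! l1, ts ! l2) \<in> snd A}"
  have S_sub: "S \<subseteq> {..<k * k}" unfolding S_def using pair_index_less by auto
  define m where "m = set_encode S"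
  have "m < 2 ^ (k * k)" unfolding m_def using set_encode_less[OF S_sub] .
  moreover have "(ts ! l1, ts ! l2) \<in> snd A \<longleftrightarrow> odd (m div 2 ^ (l1 * k + l2))"
    if "l1 < k" "l2 < k" for l1 l2
  proof -
    have "finite S" using S_sub finite_subset by blast
    have "odd (m div 2 ^ (l1 * k + l2)) \<longleftrightarrow> l1 * k + l2 \<in> set_decode m"
      by (simp add: set_decode_def)
    also have "\<dots> \<longleftrightarrow> l1 * k + l2 \<in> S"
      unfolding m_def using \<open>finite S\<close> by simp
    also have "\<dots> \<longleftrightarrow> (ts ! l1, ts ! l2) \<in> snd A"
    proof
      assume "l1 * k + l2 \<in> S"
      then obtain l1' l2' where "l1 * k + l2 = l1' * k + l2'" "l2' < k"
        and "(ts ! l1', ts ! l2') \<in> snd A" unfolding S_def by blast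
      with that pair_index_inj show "(ts ! l1, ts ! l2) \<in> snd A" by metis
    qed (use that in \<open>auto simp: S_def\<close>)
    finally show ?thesis by simp
  qed
  ultimately have "describes A ts m" using ts unfolding describes_def k_def by auto
  then show ?thesis using ts by blast
qed

lemma describes_map:
  assumes "iso_via f A A'" and "describes A ts m"
  shows "describes A' (map f ts) m"
proof -
  have sub: "set ts \<subseteq> fst A" and bij: "bij_betw f (fst A) (fst A')"
    using assms unfolding describes_def iso_via_def by auto
  then have "distinct (map f ts)"
    using assms(2) unfolding describes_def by (auto simp: distinct_map bij_betw_def intro: inj_on_subset)
  moreover have "set (map f ts) \<subseteq> fst A'" using sub bij by (auto simp: bij_betw_def)
  moreover have "(f (ts ! l1), f (ts ! l2)) \<in> snd A' \<longleftrightarrow> (ts ! l1, ts ! l2) \<in> snd A"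
    if "l1 < length ts" "l2 < length ts" for l1 l2
    using assms(1) sub that unfolding iso_via_def by (auto simp: subset_iff)
  ultimately show ?thesis using assms(2) unfolding describes_def by auto
qed

definition table_struc :: "nat \<Rightarrow> nat \<Rightarrow> struc" where
  "table_struc k m = ({..<k}, {(i, j). i < k \<and> j < k \<and> odd (m div 2 ^ (i * k + j))})"

lemma describes_table_struc: "m < 2 ^ (k * k) \<Longrightarrow> describes (table_struc k m) [0..<k] m"
  unfolding describes_def table_struc_def by auto

lemma iso_table_struc:
  assumes "describes A ts m" and "set ts = fst A"
  shows "iso (table_struc (length ts) m) A"
proof -
  have "bij_betw ((!) ts) {..<length ts} (fst A)"
    using assms unfolding describes_def by (intro bij_betw_nth) auto
  then have "iso_via ((!) ts) (table_struc (length ts) m) A"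
    using assms(1) unfolding iso_via_def describes_def table_struc_def by auto
  then show ?thesis unfolding iso_iff_iso_via by blast
qed

definition image_struc :: "(nat \<Rightarrow> nat) \<Rightarrow> struc \<Rightarrow> struc" where
  "image_struc f A = (f ` fst A, {(f a, f b) | a b. (a, b) \<in> snd A})"

lemma iso_via_image_struc:
  assumes "inj_on f (fst A)" and "wf_struc A"
  shows "iso_via f A (image_struc f A)"
proof -
  have "(f a, f b) \<in> snd (image_struc f A) \<longleftrightarrow> (a, b) \<in> snd A"
    if "a \<in> fst A" "b \<in> fst A" for a b
    using that assms unfolding image_struc_def wf_struc_def by (auto dest: inj_onD)
  then show ?thesis using assms(1) unfolding iso_via_def image_struc_def by (auto simp: bij_betw_def)
qed

text \<open>A finite list of constants is coded by a pair (c, B): its entries are the base-B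
  digits of c.  Every list arises in this way.\<close>

definition digit :: "nat \<Rightarrow> nat \<Rightarrow> nat \<Rightarrow> nat" where
  "digit c B l = c div B ^ l mod B"

fun from_digits :: "nat \<Rightarrow> nat list \<Rightarrow> nat" where
  "from_digits B [] = 0"
| "from_digits B (d # ds) = d + B * from_digits B ds"

lemma digit_from_digits:
  "\<forall>d\<in>set ds. d < B \<Longrightarrow> l < length ds \<Longrightarrow> digit (from_digits B ds) B l = ds ! l"
proof (induction ds arbitrary: l)
  case (Cons d ds)
  then have "d < B" by simp
  show ?case
  proof (cases l)
    case (Suc l')
    have "(d + B * from_digits B ds) div B ^ l = from_digits B ds div B ^ l'"
      using \<open>d < B\<close> Suc by (simp add: div_mult2_eq)
    then show ?thesis using Cons Suc by (simp add: digit_def)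
  qed (use \<open>d < B\<close> in \<open>simp add: digit_def\<close>)
qed simp

lemma digits_exist: "\<exists>c B. map (digit c B) [0..<length ts] = ts"
proof -
  define B where "B = Suc (sum_list ts)"
  have "\<forall>d\<in>set ts. d < B"
    unfolding B_def using member_le_sum_list[of _ ts] by (simp add: le_imp_less_Suc)
  then have "map (digit (from_digits B ts) B) [0..<length ts] = ts"
    by (intro nth_equalityI) (auto simp: digit_from_digits)
  then show ?thesis by blast
qed

definition table_diagram :: "nat \<Rightarrow> nat \<Rightarrow> nat \<Rightarrow> nat \<Rightarrow> literal set" where
  "table_diagram c B k m = (\<lambda>(l1, l2). (odd (m div 2 ^ (l1 * k + l2)), Rel (digit c B l1) (digit c B l2)))
     ` ({..<k} \<times> {..<k})"

definition admissible :: "nat \<Rightarrow> nat \<Rightarrow> nat \<Rightarrow> nat \<Rightarrow> bool" where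
  "admissible c B k m \<longleftrightarrow> (\<forall>l1<k. \<forall>l2<k. digit c B l1 = digit c B l2 \<longrightarrow> l1 = l2) \<and> m < 2 ^ (k * k)"

lemma admissible_iff:
  "admissible c B k m \<longleftrightarrow> distinct (map (digit c B) [0..<k]) \<and> m < 2 ^ (k * k)"
  unfolding admissible_def by (auto simp: distinct_conv_nth)

lemma table_diagram_subset_iff:
  assumes "admissible c B k m"
  shows "table_diagram c B k m \<subseteq> diagram A \<longleftrightarrow> describes A (map (digit c B) [0..<k]) m"
proof -
  have "table_diagram c B k m \<subseteq> diagram A \<longleftrightarrow> (\<forall>l1<k. \<forall>l2<k.
      digit c B l1 \<in> fst A \<and> digit c B l2 \<in> fst A \<and>
      ((digit c B l1, digit c B l2) \<in> snd A \<longleftrightarrow> odd (m div 2 ^ (l1 * k + l2))))"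
    unfolding table_diagram_def by auto
  also have "\<dots> \<longleftrightarrow> describes A (map (digit c B) [0..<k]) m"
    using assms unfolding describes_def admissible_iff by auto
  finally show ?thesis .
qed

text \<open>The value of a table with k entries; it lies in [2^(k*k), 2^(k*k+1)), so longer tables
  have larger values.\<close>

definition table_value :: "nat \<Rightarrow> nat \<Rightarrow> nat" where
  "table_value k m = 2 ^ (k * k) + m"

lemma table_value_less:
  assumes "k < n" and "m < 2 ^ (k * k)"
  shows "table_value k m < table_value n m'"
proof -
  have "Suc k * Suc k \<le> n * n" using assms(1) by (intro mult_le_mono) auto
  then have "k * k + 1 \<le> n * n" by simp
  then have "(2::nat) ^ (k * k + 1) \<le> 2 ^ (n * n)" by (rule power_increasing) simp
  then show ?thesis using assms(2) unfolding table_value_def by simp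
qed

definition order_of_tables :: "(literal set \<times> literal) set" where
  "order_of_tables = {(table_diagram c B k m, \<phi>) | c B k m \<phi>.
      admissible c B k m \<and> \<phi> \<in> diagram (std_order (table_value k m))}"

definition table_values :: "struc \<Rightarrow> nat set" where
  "table_values A = {table_value (length ts) m | ts m. describes A ts m}"

lemma apply_order_of_tables:
  "apply_trans order_of_tables A = (\<Union>v \<in> table_values A. diagram (std_order v))"
proof -
  have found: "(\<exists>c B k m. admissible c B k m \<and> table_diagram c B k m \<subseteq> diagram A \<and> v = table_value k m)
      \<longleftrightarrow> v \<in> table_values A" for v
  proof
    assume "\<exists>c B k m. admissible c B k m \<and> table_diagram c B k m \<subseteq> diagram A \<and> v = table_value k m"
    then obtain c B k m where "admissible c B k m" "table_diagram c B k m \<subseteq> diagram A"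
      and v: "v = table_value (length (map (digit c B) [0..<k])) m" by auto
    then have "describes A (map (digit c B) [0..<k]) m" using table_diagram_subset_iff by blast
    then show "v \<in> table_values A" unfolding table_values_def v by blast
  next
    assume "v \<in> table_values A"
    then obtain ts m where ts: "describes A ts m" and v: "v = table_value (length ts) m"
      unfolding table_values_def by blast
    obtain c B where digits: "map (digit c B) [0..<length ts] = ts" using digits_exist by blast
    then have "admissible c B (length ts) m"
      using ts unfolding describes_def admissible_iff by simp
    moreover have "table_diagram c B (length ts) m \<subseteq> diagram A"
      using table_diagram_subset_iff[OF calculation] digits ts by simp
    ultimately show "\<exists>c B k m. admissible c B k m \<and> table_diagram c B k m \<subseteq> diagram A \<and> v = table_value k m"
      using v by blast
  qed
  have "\<phi> \<in> apply_trans order_of_tables A \<longleftrightarrow> (\<exists>v. (\<exists>c B k m. admissible c B k m \<and>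
      table_diagram c B k m \<subseteq> diagram A \<and> v = table_value k m) \<and> \<phi> \<in> diagram (std_order v))" for \<phi>
    unfolding apply_trans_def order_of_tables_def by blast
  then show ?thesis unfolding found by blast
qed

lemma table_values_finite_nonempty:
  assumes "finite (fst A)"
  shows "finite (table_values A)" and "table_values A \<noteq> {}"
proof -
  let ?n = "card (fst A)"
  have "v < table_value (Suc ?n) 0" if member: "v \<in> table_values A" for v
  proof -
    obtain ts m where ts: "describes A ts m" and v: "v = table_value (length ts) m"
      using member unfolding table_values_def by blast
    have "length ts < Suc ?n" using describes_length_le[OF ts assms] by simp
    moreover have "m < 2 ^ (length ts * length ts)" using ts unfolding describes_def by simp
    ultimately show ?thesis unfolding v by (rule table_value_less)
  qed
  then have "table_values A \<subseteq> {..<table_value (Suc ?n) 0}" by auto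
  then show "finite (table_values A)" by (rule finite_subset) simp
  show "table_values A \<noteq> {}" using describes_full[OF assms] unfolding table_values_def by blast
qed

definition max_table_value :: "struc \<Rightarrow> nat" where
  "max_table_value A = Max (table_values A)"

lemma max_table_value_ge:
  "finite (fst A) \<Longrightarrow> v \<in> table_values A \<Longrightarrow> v \<le> max_table_value A"
  unfolding max_table_value_def using table_values_finite_nonempty by simp

lemma max_table_value_full:
  assumes "finite (fst A)"
  shows "\<exists>ts m. describes A ts m \<and> length ts = card (fst A) \<and>
           max_table_value A = table_value (card (fst A)) m"
proof -
  let ?n = "card (fst A)"
  have "max_table_value A \<in> table_values A"
    unfolding max_table_value_def using table_values_finite_nonempty[OF assms] by simp
  then obtain ts m where ts: "describes A ts m" and max: "max_table_value A = table_value (length ts) m"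
    unfolding table_values_def by blast
  obtain ts' m' where ts': "describes A ts' m'" "length ts' = ?n"
    using describes_full[OF assms] by blast
  have "\<not> length ts < ?n"
  proof
    assume "length ts < ?n"
    then have "max_table_value A < table_value ?n m'"
      using ts unfolding max describes_def by (intro table_value_less) auto
    moreover have "table_value ?n m' \<le> max_table_value A"
      using ts' max_table_value_ge[OF assms] unfolding table_values_def by force
    ultimately show False by simp
  qed
  then have "length ts = ?n" using describes_length_le[OF ts assms] by simp
  then show ?thesis using ts max by auto
qed

lemma apply_order_of_tables_max:
  assumes "finite (fst A)"
  shows "apply_trans order_of_tables A = diagram (std_order (max_table_value A))"
proof -
  have "max_table_value A \<in> table_values A"
    unfolding max_table_value_def using table_values_finite_nonempty[OF assms] by simp
  then show ?thesis
    unfolding apply_order_of_tables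
    using max_table_value_ge[OF assms] diagram_std_order_mono by blast
qed

lemma table_values_iso:
  assumes "iso A A'"
  shows "table_values A \<subseteq> table_values A'"
proof
  fix v assume v_mem: "v \<in> table_values A"
  obtain f where f: "iso_via f A A'" using assms unfolding iso_iff_iso_via by blast
  obtain ts m where ts: "describes A ts m" and v: "v = table_value (length (map f ts)) m"
    using v_mem unfolding table_values_def by auto
  from f have "describes A' (map f ts) m" using ts by (rule describes_map)
  then show "v \<in> table_values A'" unfolding table_values_def v by blast
qed

lemma max_table_value_iso: "iso A A' \<Longrightarrow> max_table_value A = max_table_value A'"
  unfolding max_table_value_def using table_values_iso iso_sym by (metis subset_antisym)

lemma iso_if_max_table_value_eq:
  assumes "finite (fst A)" and "finite (fst A')" and "max_table_value A = max_table_value A'"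
  shows "iso A A'"
proof -
  obtain ts m where ts: "describes A ts m" "length ts = card (fst A)"
    and max: "max_table_value A = table_value (card (fst A)) m"
    using max_table_value_full[OF assms(1)] by blast
  obtain ts' m' where ts': "describes A' ts' m'" "length ts' = card (fst A')"
    and max': "max_table_value A' = table_value (card (fst A')) m'"
    using max_table_value_full[OF assms(2)] by blast
  have bound: "m < 2 ^ (card (fst A) * card (fst A))" "m' < 2 ^ (card (fst A') * card (fst A'))"
    using ts ts' unfolding describes_def by auto
  have "card (fst A) = card (fst A')"
    using table_value_less[OF _ bound(1), of _ m'] table_value_less[OF _ bound(2), of _ m]
      assms(3) max max' by (metis less_irrefl nat_neq_iff)
  then have "m = m'" using assms(3) max max' by (simp add: table_value_def)
  have "set ts = fst A" "set ts' = fst A'"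
    using ts ts' card_subset_eq[OF assms(1), of "set ts"] card_subset_eq[OF assms(2), of "set ts'"]
    unfolding describes_def by (simp_all add: distinct_card)
  then have "iso (table_struc (card (fst A)) m) A" "iso (table_struc (card (fst A)) m) A'"
    using iso_table_struc ts ts' \<open>m = m'\<close> \<open>card (fst A) = card (fst A')\<close> by metis+
  then show ?thesis by (metis iso_sym iso_trans)
qed

definition table_diagram_code :: "nat \<Rightarrow> nat \<Rightarrow> nat \<Rightarrow> nat \<Rightarrow> nat" where
  "table_diagram_code c B k m =
     (\<Sum>l1<k. \<Sum>l2<k. 2 ^ lit_code (m div 2 ^ (l1 * k + l2) mod 2) 1 (digit c B l1) (digit c B l2))"

lemma set_encode_table_diagram:
  assumes "admissible c B k m"
  shows "set_encode (enc_lit ` table_diagram c B k m) = table_diagram_code c B k m"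
proof -
  define F where "F = (\<lambda>(l1, l2). (odd (m div 2 ^ (l1 * k + l2)), Rel (digit c B l1) (digit c B l2)))"
  let ?D = "{..<k} \<times> {..<k}"
  have "inj_on F ?D"
    using assms unfolding F_def admissible_def by (auto intro!: inj_onI)
  then have inj: "inj_on (enc_lit \<circ> F) ?D"
    using inj_enc_lit by (simp add: comp_inj_on inj_on_subset)
  have "set_encode (enc_lit ` table_diagram c B k m) = sum ((^) 2) ((enc_lit \<circ> F) ` ?D)"
    unfolding set_encode_def table_diagram_def F_def by (simp add: image_comp)
  also have "\<dots> = sum ((^) 2 \<circ> (enc_lit \<circ> F)) ?D"
    using inj by (rule sum.reindex)
  also have "\<dots> = (\<Sum>l1<k. \<Sum>l2<k. 2 ^ enc_lit (F (l1, l2)))"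
    by (simp add: sum.cartesian_product split_def)
  also have "\<dots> = table_diagram_code c B k m"
  proof -
    have "(if odd q then 1 else 0) = q mod 2" for q :: nat
      by (simp add: odd_iff_mod_2_eq_one)
    then show ?thesis unfolding table_diagram_code_def F_def by (simp add: enc_lit_code)
  qed
  finally show ?thesis .
qed

definition order_code :: "nat \<Rightarrow> nat \<Rightarrow> nat \<Rightarrow> nat \<Rightarrow> nat \<Rightarrow> nat \<Rightarrow> nat \<Rightarrow> bool" where
  "order_code c B k m i j x \<longleftrightarrow> admissible c B k m \<and> i < table_value k m \<and> j < table_value k m \<and>
     (x = prod_encode (table_diagram_code c B k m, lit_code (if i = j then 1 else 0) 0 i j)
    \<or> x = prod_encode (table_diagram_code c B k m, lit_code (if i < j then 1 else 0) 1 i j))"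

lemma enc_order_of_tables:
  "enc_pair ` order_of_tables = {x. \<exists>c B k m i j. order_code c B k m i j x}"
proof -
  have lit: "\<phi> \<in> diagram (std_order v) \<longleftrightarrow>
      (\<exists>i j. i < v \<and> j < v \<and> (\<phi> = (i = j, Eq i j) \<or> \<phi> = (i < j, Rel i j)))" for \<phi> v
    unfolding diagram_std_order by blast
  have code: "enc_pair (table_diagram c B k m, \<phi>) = prod_encode (table_diagram_code c B k m, enc_lit \<phi>)"
    if "admissible c B k m" for c B k m \<phi>
    using set_encode_table_diagram[OF that] by (simp add: enc_pair_def)
  show ?thesis
  proof (rule set_eqI, rule iffI)
    fix x assume "x \<in> enc_pair ` order_of_tables"
    then obtain c B k m \<phi> where adm: "admissible c B k m"
      and \<phi>: "\<phi> \<in> diagram (std_order (table_value k m))"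
      and x: "x = enc_pair (table_diagram c B k m, \<phi>)"
      unfolding order_of_tables_def by blast
    from \<phi> obtain i j where "i < table_value k m" "j < table_value k m"
      "\<phi> = (i = j, Eq i j) \<or> \<phi> = (i < j, Rel i j)"
      unfolding lit by blast
    then have "order_code c B k m i j x"
      unfolding order_code_def x code[OF adm] using adm by (auto simp: enc_lit_code)
    then show "x \<in> {x. \<exists>c B k m i j. order_code c B k m i j x}" by blast
  next
    fix x assume "x \<in> {x. \<exists>c B k m i j. order_code c B k m i j x}"
    then obtain c B k m i j where adm: "admissible c B k m"
      and ij: "i < table_value k m" "j < table_value k m"
      and x: "x = prod_encode (table_diagram_code c B k m, lit_code (if i = j then 1 else 0) 0 i j)
            \<or> x = prod_encode (table_diagram_code c B k m, lit_code (if i < j then 1 else 0) 1 i j)"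
      unfolding order_code_def by blast
    then obtain \<phi> where "\<phi> = (i = j, Eq i j) \<or> \<phi> = (i < j, Rel i j)"
      and x_code: "x = prod_encode (table_diagram_code c B k m, enc_lit \<phi>)"
    proof -
      from x consider
          "x = prod_encode (table_diagram_code c B k m, enc_lit (i = j, Eq i j))"
        | "x = prod_encode (table_diagram_code c B k m, enc_lit (i < j, Rel i j))"
        unfolding enc_lit_code by blast
      then show thesis using that by cases blast+
    qed
    then have "\<phi> \<in> diagram (std_order (table_value k m))" using ij unfolding lit by blast
    then have "(table_diagram c B k m, \<phi>) \<in> order_of_tables"
      using adm unfolding order_of_tables_def by blast
    then show "x \<in> enc_pair ` order_of_tables"
      using x_code code[OF adm] by (intro image_eqI[of _ _ "(table_diagram c B k m, \<phi>)"]) auto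
  qed
qed

text \<open>For the search, all witnesses are bounded by one number.\<close>

lemma enc_order_of_tables_bounded:
  "enc_pair ` order_of_tables =
     {x. \<exists>N. \<exists>c<N. \<exists>B<N. \<exists>k<N. \<exists>m<N. \<exists>i<N. \<exists>j<N. order_code c B k m i j x}"
  unfolding enc_order_of_tables
proof (intro Collect_cong iffI)
  fix x assume "\<exists>c B k m i j. order_code c B k m i j x"
  then obtain c B k m i j where "order_code c B k m i j x" by blast
  moreover define N where "N = Suc (c + B + k + m + i + j)"
  moreover have "c < N" "B < N" "k < N" "m < N" "i < N" "j < N" unfolding N_def by auto
  ultimately show "\<exists>N. \<exists>c<N. \<exists>B<N. \<exists>k<N. \<exists>m<N. \<exists>i<N. \<exists>j<N. order_code c B k m i j x" by blast
qed blast

lemma computable_digit: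
  "computable n c \<Longrightarrow> computable n B \<Longrightarrow> computable n l \<Longrightarrow>
    computable n (\<lambda>xs. digit (c xs) (B xs) (l xs))"
  unfolding digit_def by (intro computable_mod computable_div computable_power)

lemma ce_order_of_tables: "ce (enc_pair ` order_of_tables)"
  unfolding enc_order_of_tables_bounded order_code_def admissible_def table_value_def
    table_diagram_code_def
  by (rule ce_projection)
    (intro decidable_bex decidable_ball decidable_disj decidable_conj decidable_imp decidable_eq
      decidable_less computable_prod_encode computable_sum computable_if computable_digit
      computable_power computable_mod computable_div computable_add computable_mult
      computable_const computable_hd computable_tl computable_proj; simp?)

text \<open>Every premise of the transformation is finite and satisfiable: an admissible table is
  realised by the copy of its index structure placed on the digits of c.\<close>

lemma order_of_tables_premises:
  assumes "(\<alpha>, \<phi>) \<in> order_of_tables"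
  shows "finite \<alpha> \<and> (\<exists>T. wf_struc T \<and> finite (fst T) \<and> \<alpha> \<subseteq> diagram T)"
proof -
  obtain c B k m where \<alpha>: "\<alpha> = table_diagram c B k m" and adm: "admissible c B k m"
    using assms unfolding order_of_tables_def by blast
  define T where "T = image_struc (digit c B) (table_struc k m)"
  have inj: "inj_on (digit c B) (fst (table_struc k m))"
    using adm unfolding admissible_def table_struc_def by (auto intro: inj_onI)
  have wf: "wf_struc (table_struc k m)" by (auto simp: table_struc_def wf_struc_def)
  have "describes (table_struc k m) [0..<k] m"
    using adm unfolding admissible_def by (intro describes_table_struc) simp
  then have "describes T (map (digit c B) [0..<k]) m"
    using describes_map[OF iso_via_image_struc[OF inj wf]] unfolding T_def by blast
  then have "\<alpha> \<subseteq> diagram T" using table_diagram_subset_iff[OF adm] \<alpha> by simp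
  moreover have "wf_struc T" "finite (fst T)"
    using wf unfolding T_def image_struc_def wf_struc_def table_struc_def by auto
  moreover have "finite \<alpha>" unfolding \<alpha> table_diagram_def by simp
  ultimately show ?thesis by blast
qed

lemma le_FLO_if_finite:
  assumes finite: "\<forall>A\<in>K. finite (fst A)"
  shows "K \<le>\<^sub>c FLO"
  unfolding c_reducible_def
proof (intro exI[of _ order_of_tables])
  have output_order: "B = std_order (max_table_value A)"
    if "A \<in> K" "B \<in> FLO" "apply_trans order_of_tables A = diagram B" for A B
    using that finite apply_order_of_tables_max std_order_FLO
    by (intro diagram_inj) (auto simp: FLO_def)
  show "comp_embedding order_of_tables K FLO"
    unfolding comp_embedding_def comp_transformation_def
  proof (intro conjI ballI allI impI)
    show "ce (enc_pair ` order_of_tables)" by (rule ce_order_of_tables)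
  next
    fix p assume "p \<in> order_of_tables"
    then show "case p of (\<alpha>, \<phi>) \<Rightarrow> finite \<alpha> \<and> (\<exists>B. wf_struc B \<and> finite (fst B) \<and> \<alpha> \<subseteq> diagram B)"
      using order_of_tables_premises by (cases p) simp
  next
    fix A assume "A \<in> K"
    then show "\<exists>B\<in>FLO. apply_trans order_of_tables A = diagram B"
      using finite apply_order_of_tables_max std_order_FLO by blast
  next
    fix A A' B B' assume "A \<in> K" "A' \<in> K" "B \<in> FLO" "B' \<in> FLO"
      "apply_trans order_of_tables A = diagram B" "apply_trans order_of_tables A' = diagram B'"
    then have "B = std_order (max_table_value A)" and "B' = std_order (max_table_value A')"
      using output_order by blast+
    moreover have "iso A A' \<longleftrightarrow> max_table_value A = max_table_value A'"
      using \<open>A \<in> K\<close> \<open>A' \<in> K\<close> finite max_table_value_iso iso_if_max_table_value_eq by blast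
    ultimately show "iso A A' \<longleftrightarrow> iso B B'" by (simp add: iso_std_order_iff)
  qed
qed

theorem theorem2p5:
  shows "FUG \<equiv>\<^sub>c FLO"
proof -
  have "FUG \<le>\<^sub>c FLO" by (rule le_FLO_if_finite) (simp add: FUG_def)
  moreover have "FLO \<le>\<^sub>c FUG" by (rule le_FUG_if_iso_iff_card) (simp_all add: FLO_def FLO_iso_iff)
  ultimately show ?thesis unfolding c_equivalent_def ..
qed

end
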